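(* Let $B\subset A$ be Hausdorff compact spaces with $B$ closed in $A$, let $G$ be an abelian group and $n\ge1$, and suppose $\gamma\in H_{n-1}(B;G)$ is nontrivial and $i^{n-1}_{B,A}(\gamma)=0$. Then there exists a closed set $K\subset A$ containing $B$ such that $K$ is an $(n-1)$-homology membrane for $\gamma$ spanned on $B$.
   Context: $H_k(\cdot;G)$ is Čech homology (defined via nerves of finite open covers); $i^k_{B,K}$ is induced by inclusion. For closed $B\subset K$, $K$ is an $(n-1)$-homology membrane spanned on $B$ for $\gamma\in H_{n-1}(B;G)$ if $i^{n-1}_{B,K}(\gamma)=0$ but $i^{n-1}_{B,K'}(\gamma)\ne0$ for every proper closed subset $K'\subsetneq K$ containing $B$. *)

theory Defs
  imports "HOL-Analysis.Analysis"
begin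

text \<open>Cech homology via nerves of finite indexed open covers.
  A finite indexed open cover of a subspace S of X: a finite index set I of naturals
  and sets U i (i in I) open in S, covering S.\<close>

definition ccover :: "'a topology \<Rightarrow> 'a set \<Rightarrow> nat set \<Rightarrow> (nat \<Rightarrow> 'a set) \<Rightarrow> bool" where
  "ccover X S I U \<longleftrightarrow> finite I \<and> (\<forall>i\<in>I. openin (subtopology X S) (U i))
      \<and> S \<subseteq> (\<Union>i\<in>I. U i)"

definition nsimp :: "'a set \<Rightarrow> nat set \<Rightarrow> (nat \<Rightarrow> 'a set) \<Rightarrow> nat list \<Rightarrow> bool" where
  "nsimp S I U \<sigma> \<longleftrightarrow> \<sigma> \<noteq> [] \<and> set \<sigma> \<subseteq> I \<and> (\<exists>x\<in>S. \<forall>i\<in>set \<sigma>. x \<in> U i)"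

definition nchain :: "'a set \<Rightarrow> nat set \<Rightarrow> (nat \<Rightarrow> 'a set) \<Rightarrow> nat \<Rightarrow> (nat list \<Rightarrow> 'g::ab_group_add) \<Rightarrow> bool" where
  "nchain S I U k c \<longleftrightarrow> (\<forall>\<sigma>. c \<sigma> \<noteq> 0 \<longrightarrow> length \<sigma> = Suc k \<and> nsimp S I U \<sigma>)"

definition ldel :: "nat \<Rightarrow> 'b list \<Rightarrow> 'b list" where
  "ldel i \<sigma> = take i \<sigma> @ drop (Suc i) \<sigma>"

definition nbd :: "nat set \<Rightarrow> (nat list \<Rightarrow> 'g::ab_group_add) \<Rightarrow> nat list \<Rightarrow> 'g" where
  "nbd I c \<tau> = (\<Sum>(\<sigma>, i) \<in> {(\<sigma>, i). set \<sigma> \<subseteq> I \<and> length \<sigma> = Suc (length \<tau>) \<and> i < length \<sigma>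
       \<and> ldel i \<sigma> = \<tau>}. (if even i then c \<sigma> else - c \<sigma>))"

text \<open>Cycles (in degree 0 every chain is a cycle: unreduced homology) and boundaries.\<close>
definition ncycle :: "'a set \<Rightarrow> nat set \<Rightarrow> (nat \<Rightarrow> 'a set) \<Rightarrow> nat \<Rightarrow> (nat list \<Rightarrow> 'g::ab_group_add) \<Rightarrow> bool" where
  "ncycle S I U k c \<longleftrightarrow> nchain S I U k c \<and> (k = 0 \<or> nbd I c = (\<lambda>_. 0))"

definition nboundary :: "'a set \<Rightarrow> nat set \<Rightarrow> (nat \<Rightarrow> 'a set) \<Rightarrow> nat \<Rightarrow> (nat list \<Rightarrow> 'g::ab_group_add) \<Rightarrow> bool" where
  "nboundary S I U k c \<longleftrightarrow> (\<exists>d. nchain S I U (Suc k) d \<and> c = nbd I d)"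

definition npush :: "nat set \<Rightarrow> (nat \<Rightarrow> nat) \<Rightarrow> (nat list \<Rightarrow> 'g::ab_group_add) \<Rightarrow> nat list \<Rightarrow> 'g" where
  "npush J f c \<tau> = (\<Sum>\<sigma> \<in> {\<sigma>. set \<sigma> \<subseteq> J \<and> length \<sigma> = length \<tau> \<and> map f \<sigma> = \<tau>}. c \<sigma>)"

text \<open>An element of the Cech homology group H_k(S;G): a choice of a k-cycle in the nerve
  of every finite open cover of S, compatible (up to boundaries) with all projections
  of refinements.  Two such families represent the same element iff they differ by
  boundaries on every cover; in particular the element is zero iff all its components
  are boundaries.\<close>
definition cech_class :: "'a topology \<Rightarrow> 'a set \<Rightarrow> nat \<Rightarrow>
    (nat set \<Rightarrow> (nat \<Rightarrow> 'a set) \<Rightarrow> nat list \<Rightarrow> 'g::ab_group_add) \<Rightarrow> bool" where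
  "cech_class X S k z \<longleftrightarrow>
     (\<forall>I U. ccover X S I U \<longrightarrow> ncycle S I U k (z I U)) \<and>
     (\<forall>I U J V f. ccover X S I U \<longrightarrow> ccover X S J V \<longrightarrow> (\<forall>j\<in>J. f j \<in> I \<and> V j \<subseteq> U (f j)) \<longrightarrow>
        nboundary S I U k (\<lambda>\<tau>. npush J f (z J V) \<tau> - z I U \<tau>))"

definition cech_zero :: "'a topology \<Rightarrow> 'a set \<Rightarrow> nat \<Rightarrow>
    (nat set \<Rightarrow> (nat \<Rightarrow> 'a set) \<Rightarrow> nat list \<Rightarrow> 'g::ab_group_add) \<Rightarrow> bool" where
  "cech_zero X S k z \<longleftrightarrow> (\<forall>I U. ccover X S I U \<longrightarrow> nboundary S I U k (z I U))"

text \<open>The image of z on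
  a cover W of K is the component of z on the restricted cover (W i inter B), viewed
  in the nerve of W via the identity on indices.\<close>
definition incl_zero :: "'a topology \<Rightarrow> 'a set \<Rightarrow> 'a set \<Rightarrow> nat \<Rightarrow>
    (nat set \<Rightarrow> (nat \<Rightarrow> 'a set) \<Rightarrow> nat list \<Rightarrow> 'g::ab_group_add) \<Rightarrow> bool" where
  "incl_zero X B K k z \<longleftrightarrow>
     (\<forall>I W. ccover X K I W \<longrightarrow> nboundary K I W k (z I (\<lambda>i. W i \<inter> B)))"

definition homology_membrane :: "'a topology \<Rightarrow> 'a set \<Rightarrow> 'a set \<Rightarrow> nat \<Rightarrow>
    (nat set \<Rightarrow> (nat \<Rightarrow> 'a set) \<Rightarrow> nat list \<Rightarrow> 'g::ab_group_add) \<Rightarrow> bool" where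
  "homology_membrane X B K k z \<longleftrightarrow>
     closedin X K \<and> B \<subseteq> K \<and> incl_zero X B K k z \<and>
     (\<forall>K'. closedin X K' \<and> B \<subseteq> K' \<and> K' \<subset> K \<longrightarrow> \<not> incl_zero X B K' k z)"

end

theory Submission
  imports Defs
begin

text \<open>By Zorn's lemma it suffices that the closed sets \<open>K \<supseteq> B\<close> on which \<open>\<gamma>\<close> dies are
  closed under intersections of chains.  Given a finite open cover of the intersection \<open>L\<close> of a
  chain, shrink it so that the closures of the new sets stay inside the old ones; by compactness
  some member \<open>K\<close> of the chain is covered by the shrunken sets, and every simplex of their nerve
  on \<open>K\<close> is already a simplex of the nerve of the original cover on \<open>L\<close>.  A bounding chain
  for \<open>\<gamma>\<close> over \<open>K\<close> is thus one over \<open>L\<close>, up to the Cech compatibility of \<open>\<gamma>\<close> between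
  the two covers restricted to \<open>B\<close>.\<close>

lemma nbd_diff: "nbd I (\<lambda>\<sigma>. d \<sigma> - e \<sigma>) = (\<lambda>\<tau>. nbd I d \<tau> - nbd I e \<tau>)"
  unfolding nbd_def
  by (rule ext, subst sum_subtractf[symmetric], rule sum.cong, auto)

lemma npush_id:
  assumes "nchain S I U k c" shows "npush I (\<lambda>j. j) c = c"
proof
  fix \<tau>
  have "{\<sigma>. set \<sigma> \<subseteq> I \<and> length \<sigma> = length \<tau> \<and> map (\<lambda>j. j) \<sigma> = \<tau>} = (if set \<tau> \<subseteq> I then {\<tau>} else {})"
    by auto
  moreover have "\<not> set \<tau> \<subseteq> I \<Longrightarrow> c \<tau> = 0"
    using assms unfolding nchain_def nsimp_def by blast
  ultimately show "npush I (\<lambda>j. j) c \<tau> = c \<tau>"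
    unfolding npush_def by auto
qed

lemma nboundary_diff:
  assumes "nboundary S I U k a" and "nboundary S I U k b"
  shows "nboundary S I U k (\<lambda>\<tau>. a \<tau> - b \<tau>)"
proof -
  obtain d e where "nchain S I U (Suc k) d" "a = nbd I d" "nchain S I U (Suc k) e" "b = nbd I e"
    using assms unfolding nboundary_def by blast
  moreover from this have "nchain S I U (Suc k) (\<lambda>\<sigma>. d \<sigma> - e \<sigma>)"
    unfolding nchain_def by (metis diff_self)
  ultimately show ?thesis
    unfolding nboundary_def by (auto simp: nbd_diff)
qed

lemma nboundary_mono:
  assumes "nboundary S I U k c" and "\<And>\<sigma>. nsimp S I U \<sigma> \<Longrightarrow> nsimp S' I U' \<sigma>"
  shows "nboundary S' I U' k c"
  using assms unfolding nboundary_def nchain_def by blast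

lemma cech_class_refinement_ident:
  assumes z: "cech_class X S k z" and "ccover X S I U" "ccover X S I V"
    and "\<And>i. i \<in> I \<Longrightarrow> V i \<subseteq> U i"
  shows "nboundary S I U k (\<lambda>\<tau>. z I V \<tau> - z I U \<tau>)"
proof -
  have "nchain S I V k (z I V)"
    using z \<open>ccover X S I V\<close> unfolding cech_class_def ncycle_def by blast
  then have "npush I (\<lambda>j. j) (z I V) = z I V"
    by (rule npush_id)
  moreover have "nboundary S I U k (\<lambda>\<tau>. npush I (\<lambda>j. j) (z I V) \<tau> - z I U \<tau>)"
    using conjunct2[OF z[unfolded cech_class_def], rule_format, of I U I V "\<lambda>j. j"] assms(2-4)
    by blast
  ultimately show ?thesis
    by simp
qed

lemma ccover_of_open:
  assumes "finite I" and "\<And>i. i \<in> I \<Longrightarrow> openin X (G i) \<and> U i = G i \<inter> S"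
    and "S \<subseteq> (\<Union>i\<in>I. G i)"
  shows "ccover X S I U"
  unfolding ccover_def using assms by (auto simp: openin_subtopology_Int)

lemma subset_Zorn_Inter_nonempty:
  assumes "\<A> \<noteq> {}" and ch: "\<And>\<C>. \<lbrakk>\<C> \<noteq> {}; subset.chain \<A> \<C>\<rbrakk> \<Longrightarrow> \<Inter>\<C> \<in> \<A>"
  shows "\<exists>M\<in>\<A>. \<forall>X\<in>\<A>. X \<subseteq> M \<longrightarrow> X = M"
proof -
  have "partial_order_on \<A> (relation_of (\<lambda>X Y. Y \<subseteq> X) \<A>)"
    by (auto simp: partial_order_on_def preorder_on_def refl_on_def trans_on_def antisym_on_def
        relation_of_def)
  moreover have "\<exists>U\<in>\<A>. \<forall>X\<in>\<C>. U \<subseteq> X" if "\<C> \<in> Chains (relation_of (\<lambda>X Y. Y \<subseteq> X) \<A>)" for \<C>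
  proof (cases "\<C> = {}")
    case True
    with assms(1) show ?thesis
      by blast
  next
    case False
    have "subset.chain \<A> \<C>"
      using that unfolding subset_chain_def Chains_def relation_of_def by auto
    from ch[OF False this] show ?thesis
      by blast
  qed
  ultimately show ?thesis
    using predicate_Zorn[of \<A> "\<lambda>X Y. Y \<subseteq> X"] by auto
qed

lemma compactin_disjoint_Inter_closed_chain:
  assumes "compactin X C" and "\<K> \<noteq> {}" and closed: "\<And>K. K \<in> \<K> \<Longrightarrow> closedin X K"
    and chain: "\<forall>A\<in>\<K>. \<forall>B\<in>\<K>. A \<subseteq> B \<or> B \<subseteq> A" and "\<Inter>\<K> \<inter> C = {}"
  obtains K where "K \<in> \<K>" "K \<inter> C = {}"
proof -
  have "openin X U" if "U \<in> (\<lambda>K. topspace X - K) ` \<K>" for U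
    using that closed by blast
  moreover have "C \<subseteq> \<Union>((\<lambda>K. topspace X - K) ` \<K>)"
    using assms(5) compactin_subset_topspace[OF assms(1)] by blast
  ultimately have "\<exists>\<F>. finite \<F> \<and> \<F> \<subseteq> (\<lambda>K. topspace X - K) ` \<K> \<and> C \<subseteq> \<Union>\<F>"
    by (rule compactinD[OF assms(1)])
  then obtain \<F> where "finite \<F>" "\<F> \<subseteq> (\<lambda>K. topspace X - K) ` \<K>" "C \<subseteq> \<Union>\<F>"
    by blast
  from finite_subset_image[OF this(1,2)]
  obtain \<G> where \<G>: "\<G> \<subseteq> \<K>" "finite \<G>" "\<F> = (\<lambda>K. topspace X - K) ` \<G>"
    by blast
  show thesis
  proof (cases "\<G> = {}")
    case True
    then have "C = {}"
      using \<G>(3) \<open>C \<subseteq> \<Union>\<F>\<close> by simp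
    with \<open>\<K> \<noteq> {}\<close> that show thesis
      by blast
  next
    case False
    have "subset.chain \<G> \<G>"
      using chain \<G>(1) unfolding subset_chain_def by blast
    then have "\<Inter>\<G> \<in> \<G>"
      using Inter_in_chain \<G>(2) False by blast
    moreover have "\<Inter>\<G> \<inter> C = {}"
      using \<G>(3) \<open>C \<subseteq> \<Union>\<F>\<close> by blast
    ultimately show thesis
      using \<G>(1) that by blast
  qed
qed

lemma regular_space_compactin_shrink_cover:
  assumes "regular_space X" and "compactin X K" and open_V: "\<And>i. i \<in> I \<Longrightarrow> openin X (V i)"
    and "K \<subseteq> (\<Union>i\<in>I. V i)"
  obtains P C where "\<And>i. i \<in> I \<Longrightarrow> openin X (P i) \<and> closedin X (C i) \<and> P i \<subseteq> C i \<and> C i \<subseteq> V i"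
    and "K \<subseteq> (\<Union>i\<in>I. P i)"
proof -
  have nbhd_base: "neighbourhood_base_of (closedin X) X"
    using assms(1) by (simp add: neighbourhood_base_of_closedin)
  have "\<exists>i N D. i \<in> I \<and> openin X N \<and> closedin X D \<and> x \<in> N \<and> N \<subseteq> D \<and> D \<subseteq> V i"
    if "x \<in> K" for x
  proof -
    obtain i where i: "i \<in> I" "x \<in> V i"
      using \<open>x \<in> K\<close> assms(4) by blast
    then obtain N D where "openin X N" "closedin X D" "x \<in> N" "N \<subseteq> D" "D \<subseteq> V i"
      using nbhd_base open_V unfolding neighbourhood_base_of by meson
    with i show ?thesis
      by blast
  qed
  then obtain ix N D where ix: "\<And>x. x \<in> K \<Longrightarrow> ix x \<in> I"
    and N: "\<And>x. x \<in> K \<Longrightarrow> openin X (N x) \<and> x \<in> N x"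
    and D: "\<And>x. x \<in> K \<Longrightarrow> closedin X (D x) \<and> N x \<subseteq> D x \<and> D x \<subseteq> V (ix x)"
    by metis
  have "\<And>U. U \<in> N ` K \<Longrightarrow> openin X U" and "K \<subseteq> \<Union>(N ` K)"
    using N by auto
  then have "\<exists>\<F>. finite \<F> \<and> \<F> \<subseteq> N ` K \<and> K \<subseteq> \<Union>\<F>"
    by (rule compactinD[OF assms(2)])
  then obtain \<F> where "finite \<F>" "\<F> \<subseteq> N ` K" "K \<subseteq> \<Union>\<F>"
    by blast
  from finite_subset_image[OF this(1,2)]
  obtain T where T: "T \<subseteq> K" "finite T" "K \<subseteq> \<Union>(N ` T)"
    using \<open>K \<subseteq> \<Union>\<F>\<close> by blast
  define P where "P i = \<Union>(N ` {x\<in>T. ix x = i})" for i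
  define C where "C i = \<Union>(D ` {x\<in>T. ix x = i})" for i
  show thesis
  proof
    fix i
    have "openin X (P i)"
      unfolding P_def by (intro openin_Union) (use N T(1) in auto)
    moreover have "closedin X (C i)"
      unfolding C_def by (intro closedin_Union) (use D T in auto)
    moreover have "P i \<subseteq> C i"
      unfolding P_def C_def by (intro UN_mono) (use D T(1) in auto)
    moreover have "C i \<subseteq> V i"
      unfolding C_def by (intro UN_least) (use D T(1) in auto)
    ultimately show "openin X (P i) \<and> closedin X (C i) \<and> P i \<subseteq> C i \<and> C i \<subseteq> V i"
      by (intro conjI)
  next
    show "K \<subseteq> (\<Union>i\<in>I. P i)"
    proof
      fix x assume "x \<in> K"
      then obtain y where "y \<in> T" "x \<in> N y"
        using T(3) by blast
      then have "x \<in> P (ix y)" "ix y \<in> I"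
        unfolding P_def using ix T(1) by auto
      then show "x \<in> (\<Union>i\<in>I. P i)"
        by blast
    qed
  qed
qed

lemma closed_chain_eventually_same_nerve:
  assumes "compact_space X" and "\<K> \<noteq> {}"
    and closed: "\<And>K. K \<in> \<K> \<Longrightarrow> closedin X K" and chain: "\<forall>A\<in>\<K>. \<forall>B\<in>\<K>. A \<subseteq> B \<or> B \<subseteq> A"
    and "finite I" and closed_C: "\<And>i. i \<in> I \<Longrightarrow> closedin X (C i)"
  obtains K where "K \<in> \<K>"
    and "\<And>S. \<lbrakk>S \<subseteq> I; \<exists>x\<in>K. \<forall>i\<in>S. x \<in> C i\<rbrakk> \<Longrightarrow> \<exists>y\<in>\<Inter>\<K>. \<forall>i\<in>S. y \<in> C i"
proof -
  define bad where "bad = {S. S \<subseteq> I \<and> \<not> (\<exists>y\<in>\<Inter>\<K>. \<forall>i\<in>S. y \<in> C i)}"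
  \<comment> \<open>\<open>topspace X\<close> is inserted so that \<open>D {}\<close> is closed rather than \<open>\<Inter>{} = UNIV\<close>.\<close>
  define D where "D S = \<Inter>(insert (topspace X) (C ` S))" for S
  have "closedin X (\<Union>(D ` bad))"
  proof (intro closedin_Union)
    show "finite (D ` bad)"
      unfolding bad_def using \<open>finite I\<close> by simp
  next
    fix T assume "T \<in> D ` bad"
    then obtain S where "S \<subseteq> I" and T: "T = D S"
      unfolding bad_def by blast
    have "closedin X (\<Inter>(insert (topspace X) (C ` S)))"
      using closed_C \<open>S \<subseteq> I\<close> by (intro closedin_Inter) auto
    then show "closedin X T"
      unfolding T D_def .
  qed
  then have "compactin X (\<Union>(D ` bad))"
    using assms(1) closedin_compact_space by blast
  moreover have "\<Inter>\<K> \<inter> D S = {}" if "S \<in> bad" for S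
    using that unfolding bad_def D_def by blast
  then have "\<Inter>\<K> \<inter> \<Union>(D ` bad) = {}"
    by blast
  ultimately obtain K where K: "K \<in> \<K>" "K \<inter> \<Union>(D ` bad) = {}"
    using compactin_disjoint_Inter_closed_chain[OF _ assms(2) closed chain] by blast
  show thesis
  proof
    fix S assume "S \<subseteq> I" "\<exists>x\<in>K. \<forall>i\<in>S. x \<in> C i"
    then obtain x where "x \<in> K" "x \<in> D S"
      using closedin_subset[OF closed[OF K(1)]] unfolding D_def by blast
    then have "S \<notin> bad"
      using K(2) by blast
    then show "\<exists>y\<in>\<Inter>\<K>. \<forall>i\<in>S. y \<in> C i"
      using \<open>S \<subseteq> I\<close> unfolding bad_def by blast
  qed (rule K(1))
qed

lemma closed_chain_eventually_refines_nerve: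
  assumes "regular_space X" and "compact_space X" and "\<K> \<noteq> {}"
    and closed: "\<And>K. K \<in> \<K> \<Longrightarrow> closedin X K" and chain: "\<forall>A\<in>\<K>. \<forall>B\<in>\<K>. A \<subseteq> B \<or> B \<subseteq> A"
    and "finite I" and open_V: "\<And>i. i \<in> I \<Longrightarrow> openin X (V i)" and "\<Inter>\<K> \<subseteq> (\<Union>i\<in>I. V i)"
  obtains K P where "K \<in> \<K>" and "\<And>i. i \<in> I \<Longrightarrow> openin X (P i) \<and> P i \<subseteq> V i"
    and "K \<subseteq> (\<Union>i\<in>I. P i)"
    and "\<And>S. \<lbrakk>S \<subseteq> I; \<exists>x\<in>K. \<forall>i\<in>S. x \<in> P i\<rbrakk> \<Longrightarrow> \<exists>y\<in>\<Inter>\<K>. \<forall>i\<in>S. y \<in> V i"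
proof -
  have "compactin X (\<Inter>\<K>)"
    using closedin_compact_space[OF assms(2) closedin_Inter[OF assms(3) closed]] .
  from regular_space_compactin_shrink_cover[OF assms(1) this open_V assms(8)]
  obtain P C where PC: "\<And>i. i \<in> I \<Longrightarrow> openin X (P i) \<and> closedin X (C i) \<and> P i \<subseteq> C i \<and> C i \<subseteq> V i"
    and cover: "\<Inter>\<K> \<subseteq> (\<Union>i\<in>I. P i)"
    by metis
  then have open_P: "\<And>i. i \<in> I \<Longrightarrow> openin X (P i)" and closed_C: "\<And>i. i \<in> I \<Longrightarrow> closedin X (C i)"
    and P_sub: "\<And>i. i \<in> I \<Longrightarrow> P i \<subseteq> C i" and C_sub: "\<And>i. i \<in> I \<Longrightarrow> C i \<subseteq> V i"
    by auto
  have "closedin X (topspace X - (\<Union>i\<in>I. P i))"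
    using open_P by (intro closedin_diff closedin_topspace openin_Union) auto
  then have "compactin X (topspace X - (\<Union>i\<in>I. P i))"
    using closedin_compact_space[OF assms(2)] by blast
  moreover have "\<Inter>\<K> \<inter> (topspace X - (\<Union>i\<in>I. P i)) = {}"
    using cover by blast
  ultimately obtain K1 where K1: "K1 \<in> \<K>" "K1 \<inter> (topspace X - (\<Union>i\<in>I. P i)) = {}"
    using compactin_disjoint_Inter_closed_chain[OF _ assms(3) closed chain] by blast
  obtain K2 where K2: "K2 \<in> \<K>"
    and nerve: "\<And>S. \<lbrakk>S \<subseteq> I; \<exists>x\<in>K2. \<forall>i\<in>S. x \<in> C i\<rbrakk> \<Longrightarrow> \<exists>y\<in>\<Inter>\<K>. \<forall>i\<in>S. y \<in> C i"
    using closed_chain_eventually_same_nerve[of X \<K> I C, OF assms(2,3) closed chain \<open>finite I\<close> closed_C]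
    by blast
  show thesis
  proof
    show "K1 \<inter> K2 \<in> \<K>"
      using chain K1(1) K2 by (metis Int_absorb1 Int_absorb2)
    show "K1 \<inter> K2 \<subseteq> (\<Union>i\<in>I. P i)"
      using K1 closedin_subset[OF closed[OF K1(1)]] by blast
  next
    fix S assume "S \<subseteq> I" "\<exists>x\<in>K1 \<inter> K2. \<forall>i\<in>S. x \<in> P i"
    then have "\<exists>x\<in>K2. \<forall>i\<in>S. x \<in> C i"
      using P_sub by blast
    then obtain y where "y \<in> \<Inter>\<K>" "\<forall>i\<in>S. y \<in> C i"
      using nerve \<open>S \<subseteq> I\<close> by blast
    then show "\<exists>y\<in>\<Inter>\<K>. \<forall>i\<in>S. y \<in> V i"
      using C_sub \<open>S \<subseteq> I\<close> by blast
  qed (use open_P P_sub C_sub in blast)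
qed

lemma incl_zero_nboundary_on_refined_nerve:
  assumes z: "cech_class X B k z" and zK: "incl_zero X B K k z"
    and "B \<subseteq> L" "L \<subseteq> K" "finite I"
    and open_V: "\<And>i. i \<in> I \<Longrightarrow> openin X (V i)" and open_P: "\<And>i. i \<in> I \<Longrightarrow> openin X (P i)"
    and P_sub: "\<And>i. i \<in> I \<Longrightarrow> P i \<subseteq> V i" and W_eq: "\<And>i. i \<in> I \<Longrightarrow> W i = V i \<inter> L"
    and cover_W: "L \<subseteq> (\<Union>i\<in>I. W i)" and cover_P: "K \<subseteq> (\<Union>i\<in>I. P i)"
    and nerve: "\<And>S. \<lbrakk>S \<subseteq> I; \<exists>x\<in>K. \<forall>i\<in>S. x \<in> P i\<rbrakk> \<Longrightarrow> \<exists>y\<in>L. \<forall>i\<in>S. y \<in> V i"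
  shows "nboundary L I W k (z I (\<lambda>i. W i \<inter> B))"
proof -
  define U where "U = (\<lambda>i. W i \<inter> B)"
  define U' where "U' = (\<lambda>i. P i \<inter> K \<inter> B)"
  have "ccover X K I (\<lambda>i. P i \<inter> K)"
    by (rule ccover_of_open[OF \<open>finite I\<close>]) (use open_P cover_P in auto)
  then have "nboundary K I (\<lambda>i. P i \<inter> K) k (z I U')"
    using zK unfolding incl_zero_def U'_def by simp
  moreover have "nsimp L I W \<sigma>" if "nsimp K I (\<lambda>i. P i \<inter> K) \<sigma>" for \<sigma>
  proof -
    have "\<sigma> \<noteq> []" "set \<sigma> \<subseteq> I" "\<exists>x\<in>K. \<forall>i\<in>set \<sigma>. x \<in> P i"
      using that unfolding nsimp_def by auto
    moreover from this obtain y where "y \<in> L" "\<forall>i\<in>set \<sigma>. y \<in> V i"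
      using nerve by blast
    moreover from calculation have "\<forall>i\<in>set \<sigma>. y \<in> W i"
      using W_eq by auto
    ultimately show ?thesis
      unfolding nsimp_def by blast
  qed
  ultimately have boundary_U': "nboundary L I W k (z I U')"
    by (rule nboundary_mono)
  have "ccover X B I U"
  proof (rule ccover_of_open[OF \<open>finite I\<close>])
    show "openin X (V i) \<and> U i = V i \<inter> B" if "i \<in> I" for i
      using open_V[OF that] W_eq[OF that] assms(3) unfolding U_def by auto
    show "B \<subseteq> (\<Union>i\<in>I. V i)"
      using assms(3) cover_W W_eq by auto
  qed
  moreover have "ccover X B I U'"
  proof (rule ccover_of_open[OF \<open>finite I\<close>])
    show "openin X (P i) \<and> U' i = P i \<inter> B" if "i \<in> I" for i
      using open_P[OF that] assms(3,4) unfolding U'_def by auto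
    show "B \<subseteq> (\<Union>i\<in>I. P i)"
      using assms(3,4) cover_P by auto
  qed
  moreover have "U' i \<subseteq> U i" if "i \<in> I" for i
    using P_sub[OF that] W_eq[OF that] assms(3,4) unfolding U_def U'_def by blast
  ultimately have "nboundary B I U k (\<lambda>\<tau>. z I U' \<tau> - z I U \<tau>)"
    by (rule cech_class_refinement_ident[OF z])
  moreover have "nsimp L I W \<sigma>" if "nsimp B I U \<sigma>" for \<sigma>
    using that assms(3) unfolding nsimp_def U_def by blast
  ultimately have "nboundary L I W k (\<lambda>\<tau>. z I U' \<tau> - z I U \<tau>)"
    by (rule nboundary_mono)
  from nboundary_diff[OF boundary_U' this] show ?thesis
    unfolding U_def by simp
qed

lemma incl_zero_Inter_closed_chain:
  assumes "Hausdorff_space X" and "compact_space X" and z: "cech_class X B k z" and "\<K> \<noteq> {}"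
    and \<K>: "\<And>K. K \<in> \<K> \<Longrightarrow> closedin X K \<and> B \<subseteq> K \<and> incl_zero X B K k z"
    and chain: "\<forall>A\<in>\<K>. \<forall>B\<in>\<K>. A \<subseteq> B \<or> B \<subseteq> A"
  shows "incl_zero X B (\<Inter>\<K>) k z"
  unfolding incl_zero_def
proof (intro allI impI)
  fix I W assume "ccover X (\<Inter>\<K>) I W"
  then have "finite I" and open_W: "\<forall>i\<in>I. openin (subtopology X (\<Inter>\<K>)) (W i)"
    and cover_W: "\<Inter>\<K> \<subseteq> (\<Union>i\<in>I. W i)"
    unfolding ccover_def by auto
  from open_W have "\<forall>i\<in>I. \<exists>T. openin X T \<and> W i = T \<inter> \<Inter>\<K>"
    by (simp add: openin_subtopology)
  from bchoice[OF this] obtain V where V: "\<forall>i\<in>I. openin X (V i) \<and> W i = V i \<inter> \<Inter>\<K>"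
    by blast
  then have open_V: "\<And>i. i \<in> I \<Longrightarrow> openin X (V i)"
    and W_eq: "\<And>i. i \<in> I \<Longrightarrow> W i = V i \<inter> \<Inter>\<K>"
    by auto
  have cover_V: "\<Inter>\<K> \<subseteq> (\<Union>i\<in>I. V i)"
    using cover_W W_eq by auto
  have closed: "\<And>K. K \<in> \<K> \<Longrightarrow> closedin X K"
    using \<K> by blast
  have "regular_space X"
    using compact_Hausdorff_imp_regular_space assms(1,2) by blast
  from closed_chain_eventually_refines_nerve[OF this assms(2,4) closed chain \<open>finite I\<close> open_V cover_V]
  obtain K P where "K \<in> \<K>" and P: "\<And>i. i \<in> I \<Longrightarrow> openin X (P i) \<and> P i \<subseteq> V i"
    and cover_P: "K \<subseteq> (\<Union>i\<in>I. P i)"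
    and nerve: "\<And>S. \<lbrakk>S \<subseteq> I; \<exists>x\<in>K. \<forall>i\<in>S. x \<in> P i\<rbrakk> \<Longrightarrow> \<exists>y\<in>\<Inter>\<K>. \<forall>i\<in>S. y \<in> V i"
    by metis
  have "incl_zero X B K k z" "B \<subseteq> \<Inter>\<K>" "\<Inter>\<K> \<subseteq> K"
    using \<K> \<open>K \<in> \<K>\<close> by auto
  moreover have "\<And>i. i \<in> I \<Longrightarrow> openin X (P i)" "\<And>i. i \<in> I \<Longrightarrow> P i \<subseteq> V i"
    using P by auto
  ultimately show "nboundary (\<Inter>\<K>) I W k (z I (\<lambda>i. W i \<inter> B))"
    using incl_zero_nboundary_on_refined_nerve[OF z _ _ _ \<open>finite I\<close> open_V _ _ W_eq cover_W cover_P nerve]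
    by blast
qed

theorem lemma2p6:
  fixes X :: "'a topology" and B :: "'a set" and n :: nat
    and \<gamma> :: "nat set \<Rightarrow> (nat \<Rightarrow> 'a set) \<Rightarrow> nat list \<Rightarrow> 'g::ab_group_add"
  assumes "Hausdorff_space X" and "compact_space X"
    and "closedin X B" and "n \<ge> 1"
    and "cech_class X B (n - 1) \<gamma>"
    and "\<not> cech_zero X B (n - 1) \<gamma>"
    and "incl_zero X B (topspace X) (n - 1) \<gamma>"
  shows "\<exists>K. closedin X K \<and> B \<subseteq> K \<and> homology_membrane X B K (n - 1) \<gamma>"
proof -
  define \<A> where "\<A> = {K. closedin X K \<and> B \<subseteq> K \<and> incl_zero X B K (n - 1) \<gamma>}"
  have "topspace X \<in> \<A>"
    unfolding \<A>_def using assms(3,7) closedin_subset by auto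
  then have "\<A> \<noteq> {}"
    by blast
  moreover have "\<Inter>\<C> \<in> \<A>" if "\<C> \<noteq> {}" and "subset.chain \<A> \<C>" for \<C>
  proof -
    have \<C>: "\<And>K. K \<in> \<C> \<Longrightarrow> closedin X K \<and> B \<subseteq> K \<and> incl_zero X B K (n - 1) \<gamma>"
      and chain: "\<forall>A\<in>\<C>. \<forall>B\<in>\<C>. A \<subseteq> B \<or> B \<subseteq> A"
      using that(2) unfolding subset_chain_def \<A>_def by auto
    have "incl_zero X B (\<Inter>\<C>) (n - 1) \<gamma>"
      by (rule incl_zero_Inter_closed_chain[OF assms(1,2,5) that(1) \<C> chain])
    moreover have "closedin X (\<Inter>\<C>)" "B \<subseteq> \<Inter>\<C>"
      using \<C> that(1) by auto
    ultimately show ?thesis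
      unfolding \<A>_def by blast
  qed
  ultimately obtain K where K: "K \<in> \<A>"
    and "\<forall>K'\<in>\<A>. K' \<subseteq> K \<longrightarrow> K' = K"
    using subset_Zorn_Inter_nonempty[of \<A>] by blast
  then have "homology_membrane X B K (n - 1) \<gamma>"
    unfolding homology_membrane_def \<A>_def by blast
  with K show ?thesis
    unfolding \<A>_def by blast
qed

end
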